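(* Let $G$ be a graph, $D\ge1$, and $e_1,\dots,e_r$ edges of $G$ with masses $m_{e_1},\dots,m_{e_r}$ all nonzero. If for some choice of constants $c_{e_1},\dots,c_{e_r}\in\mathbb C^D$ the intersection of quadrics $Q_{e_1}\cap\cdots\cap Q_{e_r}\subset H_1(G,\mathbb C^D)$ has a pinch point (a point of the intersection at which the differentials of the $r$ defining functions are linearly dependent), then the graph obtained from $G$ by cutting (deleting) the edges $e_1,\dots,e_r$ is disconnected.
   Context: Fix a nondegenerate symmetric bilinear form on $\mathbb C^D$ (the complexified Minkowski form), writing $v^2$ for the square of $v\in\mathbb C^D$. For an edge $e$, $e^\vee:H_1(G,\mathbb C^D)\to\mathbb C^D$ is the composite of the inclusion $H_1(G,\mathbb C^D)\subset(\mathbb C^D)^E$ with the $e$-th projection. For $c_e\in\mathbb C^D$ and a mass $m_e\in\mathbb C$, the propagator quadric is $Q_e=\{x\in H_1(G,\mathbb C^D)\mid (e^\vee(x)-c_e)^2-m_e^2=0\}$. *)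

theory Defs
  imports "HOL-Analysis.Analysis"
begin

text \<open>The vector space C^D is complex^'d for a finite type 'd (so D = CARD('d) \<ge> 1).
  A graph is given by a finite vertex set V, a finite edge set E and an (arbitrary)
  orientation src/tgt of each edge; loops and multiple edges are allowed.\<close>

definition is_graph :: "'v set \<Rightarrow> 'e set \<Rightarrow> ('e \<Rightarrow> 'v) \<Rightarrow> ('e \<Rightarrow> 'v) \<Rightarrow> bool" where
  "is_graph V E src tgt \<longleftrightarrow> finite V \<and> finite E \<and> (\<forall>e\<in>E. src e \<in> V \<and> tgt e \<in> V)"

definition nondeg_sym_bilinear :: "(complex^'d \<Rightarrow> complex^'d \<Rightarrow> complex) \<Rightarrow> bool" where
  "nondeg_sym_bilinear B \<longleftrightarrow>
     (\<forall>x y z. B (x + y) z = B x z + B y z) \<and>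
     (\<forall>a x z. B (a *s x) z = a * B x z) \<and>
     (\<forall>x y. B x y = B y x) \<and>
     (\<forall>x. (\<forall>y. B x y = 0) \<longrightarrow> x = 0)"

text \<open>The edge functional e^\<or> is evaluation x \<mapsto> x e.\<close>
definition H1 :: "'v set \<Rightarrow> 'e set \<Rightarrow> ('e \<Rightarrow> 'v) \<Rightarrow> ('e \<Rightarrow> 'v) \<Rightarrow> ('e \<Rightarrow> complex^'d) set" where
  "H1 V E src tgt = {x. (\<forall>e. e \<notin> E \<longrightarrow> x e = 0) \<and>
      (\<forall>v\<in>V. (\<Sum>e\<in>{e\<in>E. tgt e = v}. x e) - (\<Sum>e\<in>{e\<in>E. src e = v}. x e) = 0)}"

text \<open>The defining function of the propagator quadric Q_e: x \<mapsto> (e^\<or>(x) - c_e)^2 - m_e^2.\<close>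
definition prop_fun :: "(complex^'d \<Rightarrow> complex^'d \<Rightarrow> complex) \<Rightarrow> 'e \<Rightarrow> complex^'d \<Rightarrow> complex
                       \<Rightarrow> ('e \<Rightarrow> complex^'d) \<Rightarrow> complex" where
  "prop_fun B e ce me x = B (x e - ce) (x e - ce) - me ^ 2"

definition quadric :: "'v set \<Rightarrow> 'e set \<Rightarrow> ('e \<Rightarrow> 'v) \<Rightarrow> ('e \<Rightarrow> 'v) \<Rightarrow>
    (complex^'d \<Rightarrow> complex^'d \<Rightarrow> complex) \<Rightarrow> 'e \<Rightarrow> complex^'d \<Rightarrow> complex \<Rightarrow> ('e \<Rightarrow> complex^'d) set" where
  "quadric V E src tgt B e ce me = {x \<in> H1 V E src tgt. prop_fun B e ce me x = 0}"

definition differential :: "(('e \<Rightarrow> complex^'d) \<Rightarrow> complex) \<Rightarrow> ('e \<Rightarrow> complex^'d) \<Rightarrow> ('e \<Rightarrow> complex^'d) \<Rightarrow> complex" where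
  "differential f x y = deriv (\<lambda>t::complex. f (\<lambda>e. x e + t *s y e)) 0"

definition pinch_point :: "'v set \<Rightarrow> 'e set \<Rightarrow> ('e \<Rightarrow> 'v) \<Rightarrow> ('e \<Rightarrow> 'v) \<Rightarrow>
    (complex^'d \<Rightarrow> complex^'d \<Rightarrow> complex) \<Rightarrow> 'e set \<Rightarrow> ('e \<Rightarrow> complex^'d) \<Rightarrow> ('e \<Rightarrow> complex)
    \<Rightarrow> ('e \<Rightarrow> complex^'d) \<Rightarrow> bool" where
  "pinch_point V E src tgt B S c m x \<longleftrightarrow>
     x \<in> (\<Inter>e\<in>S. quadric V E src tgt B e (c e) (m e)) \<and> x \<in> H1 V E src tgt \<and>
     (\<exists>lam::'e \<Rightarrow> complex. (\<exists>e\<in>S. lam e \<noteq> 0) \<and>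
        (\<forall>y\<in>H1 V E src tgt. (\<Sum>e\<in>S. lam e * differential (prop_fun B e (c e) (m e)) x y) = 0))"

definition adj_rel :: "'e set \<Rightarrow> ('e \<Rightarrow> 'v) \<Rightarrow> ('e \<Rightarrow> 'v) \<Rightarrow> ('v \<times> 'v) set" where
  "adj_rel E src tgt = {(src e, tgt e) | e. e \<in> E} \<union> {(tgt e, src e) | e. e \<in> E}"

definition graph_connected :: "'v set \<Rightarrow> 'e set \<Rightarrow> ('e \<Rightarrow> 'v) \<Rightarrow> ('e \<Rightarrow> 'v) \<Rightarrow> bool" where
  "graph_connected V E src tgt \<longleftrightarrow> (\<forall>u\<in>V. \<forall>v\<in>V. (u, v) \<in> (adj_rel E src tgt)\<^sup>*)"

end

theory Submission
  imports Defs
begin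

text \<open>Suppose the graph stays connected after cutting the edges of S, and let x be a pinch point
  with a dependency relation whose coefficient at the edge e is nonzero. The differential of the
  propagator function of an edge e' at x is y \<mapsto> 2 B (x e' - c e') (y e'). Closing the edge e by a
  path avoiding S gives, for every a, a cycle y with y e = a that vanishes on the other edges of S.
  Evaluating the relation on y yields B (x e - c e) a = 0 for all a, so x e = c e by
  nondegeneracy, and then x \<in> Q_e forces m e = 0.\<close>

definition chain_boundary :: "'e set \<Rightarrow> ('e \<Rightarrow> 'v) \<Rightarrow> ('e \<Rightarrow> 'v) \<Rightarrow> ('e \<Rightarrow> complex^'d) \<Rightarrow> 'v \<Rightarrow> complex^'d"
  where "chain_boundary E src tgt z v = (\<Sum>e\<in>{e\<in>E. tgt e = v}. z e) - (\<Sum>e\<in>{e\<in>E. src e = v}. z e)"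

lemma H1_iff_chain_boundary:
  "z \<in> H1 V E src tgt \<longleftrightarrow> (\<forall>e. e \<notin> E \<longrightarrow> z e = 0) \<and> (\<forall>v\<in>V. chain_boundary E src tgt z v = 0)"
  unfolding H1_def chain_boundary_def by simp

lemma chain_boundary_add:
  "chain_boundary E src tgt (\<lambda>e. z1 e + z2 e) v = chain_boundary E src tgt z1 v + chain_boundary E src tgt z2 v"
  unfolding chain_boundary_def by (simp add: sum.distrib)

lemma chain_boundary_single_edge:
  assumes "finite E" "f \<in> E"
  shows "chain_boundary E src tgt (\<lambda>e. if e = f then a else 0) v =
           (if v = tgt f then a else 0) - (if v = src f then a else 0)"
  unfolding chain_boundary_def using assms by (auto simp: sum.delta)

lemma chain_along_path:
  assumes "(u, w) \<in> (adj_rel F src tgt)\<^sup>*" "F \<subseteq> E" "finite E"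
  shows "\<exists>z. (\<forall>e. e \<notin> F \<longrightarrow> z e = 0) \<and>
           (\<forall>v. chain_boundary E src tgt z v = (if v = w then a else 0) - (if v = u then a else 0))"
  using assms(1)
proof (induction rule: rtrancl_induct)
  case base
  show ?case by (rule exI[of _ "\<lambda>e. 0"]) (simp add: chain_boundary_def)
next
  case (step w w')
  then obtain z where z_supp: "\<forall>e. e \<notin> F \<longrightarrow> z e = 0"
    and z_bd: "\<forall>v. chain_boundary E src tgt z v = (if v = w then a else 0) - (if v = u then a else 0)"
    by blast
  from step(2) obtain f b where "f \<in> F"
    and fb: "(w = src f \<and> w' = tgt f \<and> b = a) \<or> (w = tgt f \<and> w' = src f \<and> b = -a)"
    unfolding adj_rel_def by blast
  with assms have "f \<in> E" by blast
  define z' where "z' = (\<lambda>e. z e + (if e = f then b else 0))"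
  have "\<forall>e. e \<notin> F \<longrightarrow> z' e = 0"
    using z_supp \<open>f \<in> F\<close> unfolding z'_def by auto
  moreover have "chain_boundary E src tgt z' v = (if v = w' then a else 0) - (if v = u then a else 0)" for v
  proof -
    have "chain_boundary E src tgt z' v =
          chain_boundary E src tgt z v + ((if v = tgt f then b else 0) - (if v = src f then b else 0))"
      unfolding z'_def chain_boundary_add chain_boundary_single_edge[OF assms(3) \<open>f \<in> E\<close>] ..
    then show ?thesis using z_bd fb by (auto simp: algebra_simps)
  qed
  ultimately show ?case by blast
qed

lemma cycle_through_edge:
  assumes "is_graph V E src tgt" "F \<subseteq> E" "f \<in> E" "f \<notin> F"
    and "(tgt f, src f) \<in> (adj_rel F src tgt)\<^sup>*"
  obtains y where "y \<in> H1 V E src tgt" "y f = a" "\<And>e. e \<noteq> f \<Longrightarrow> e \<notin> F \<Longrightarrow> y e = 0"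
proof -
  have "finite E" using assms(1) unfolding is_graph_def by blast
  from chain_along_path[OF assms(5,2) this, of a] obtain z
    where z_supp: "\<forall>e. e \<notin> F \<longrightarrow> z e = 0"
      and z_bd: "\<forall>v. chain_boundary E src tgt z v = (if v = src f then a else 0) - (if v = tgt f then a else 0)"
    by blast
  define y where "y = (\<lambda>e. z e + (if e = f then a else 0))"
  have "y \<in> H1 V E src tgt"
    using z_supp z_bd assms(2,3)
    by (auto simp: H1_iff_chain_boundary y_def chain_boundary_add
        chain_boundary_single_edge[OF \<open>finite E\<close> \<open>f \<in> E\<close>])
  moreover have "y f = a" "\<And>e. e \<noteq> f \<Longrightarrow> e \<notin> F \<Longrightarrow> y e = 0"
    using z_supp \<open>f \<notin> F\<close> unfolding y_def by auto
  ultimately show ?thesis using that by blast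
qed

lemma nondeg_sym_bilinear_zero:
  assumes "nondeg_sym_bilinear B"
  shows "B 0 z = 0" "B z 0 = 0"
proof -
  have "B ((0::complex) *s 0) z = 0 * B 0 z"
    using assms unfolding nondeg_sym_bilinear_def by blast
  then show "B 0 z = 0" by simp
  with assms show "B z 0 = 0" unfolding nondeg_sym_bilinear_def by metis
qed

lemma nondeg_sym_bilinear_square_add_scaled:
  assumes "nondeg_sym_bilinear B"
  shows "B (p + t *s q) (p + t *s q) = B p p + 2 * t * B p q + t\<^sup>2 * B q q"
proof -
  have add: "\<And>x y z. B (x + y) z = B x z + B y z" "\<And>x y z. B z (x + y) = B z x + B z y"
    and scale: "\<And>a x z. B (a *s x) z = a * B x z" "\<And>a x z. B z (a *s x) = a * B z x"
    and sym: "B q p = B p q"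
    using assms unfolding nondeg_sym_bilinear_def by metis+
  show ?thesis by (simp add: add scale sym algebra_simps power2_eq_square)
qed

lemma differential_prop_fun:
  assumes "nondeg_sym_bilinear B"
  shows "differential (prop_fun B e ce me) x y = 2 * B (x e - ce) (y e)"
proof -
  define p q where "p = x e - ce" and "q = y e"
  have "(\<lambda>t. prop_fun B e ce me (\<lambda>e. x e + t *s y e)) =
        (\<lambda>t. B p p + 2 * t * B p q + t\<^sup>2 * B q q - me\<^sup>2)"
  proof
    fix t :: complex
    have "x e + t *s y e - ce = p + t *s q"
      unfolding p_def q_def by (simp add: algebra_simps)
    then show "prop_fun B e ce me (\<lambda>e. x e + t *s y e) = B p p + 2 * t * B p q + t\<^sup>2 * B q q - me\<^sup>2"
      unfolding prop_fun_def by (simp add: nondeg_sym_bilinear_square_add_scaled[OF assms])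
  qed
  moreover have "((\<lambda>t. B p p + 2 * t * B p q + t\<^sup>2 * B q q - me\<^sup>2) has_field_derivative 2 * B p q) (at 0)"
    by (auto intro!: derivative_eq_intros)
  ultimately show ?thesis
    unfolding differential_def p_def q_def by (simp add: DERIV_imp_deriv)
qed

lemma sum_differentials_supported_on_edge:
  assumes "nondeg_sym_bilinear B" "finite S" "e \<in> S" "\<And>e'. e' \<in> S \<Longrightarrow> e' \<noteq> e \<Longrightarrow> y e' = 0"
  shows "(\<Sum>e'\<in>S. lam e' * differential (prop_fun B e' (c e') (m e')) x y) = 2 * lam e * B (x e - c e) (y e)"
proof -
  have "(\<Sum>e'\<in>S. lam e' * differential (prop_fun B e' (c e') (m e')) x y)
        = (\<Sum>e'\<in>S. if e' = e then 2 * lam e * B (x e - c e) (y e) else 0)"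
    using assms(4) by (intro sum.cong) (auto simp: differential_prop_fun[OF assms(1)] nondeg_sym_bilinear_zero[OF assms(1)])
  with assms(2,3) show ?thesis by simp
qed

theorem proposition10p1:
  fixes V :: "'v set" and E :: "'e set" and src tgt :: "'e \<Rightarrow> 'v"
    and B :: "complex^'d \<Rightarrow> complex^'d \<Rightarrow> complex"
    and S :: "'e set" and c :: "'e \<Rightarrow> complex^'d" and m :: "'e \<Rightarrow> complex"
  assumes "is_graph V E src tgt"
    and "nondeg_sym_bilinear B"
    and "S \<subseteq> E"
    and "\<forall>e\<in>S. m e \<noteq> 0"
    and "\<exists>x. pinch_point V E src tgt B S c m x"
  shows "\<not> graph_connected V (E - S) src tgt"
proof
  assume connected: "graph_connected V (E - S) src tgt"
  obtain x lam e where x_quadrics: "x \<in> (\<Inter>e\<in>S. quadric V E src tgt B e (c e) (m e))"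
    and "e \<in> S" "lam e \<noteq> 0"
    and dependency: "\<forall>y\<in>H1 V E src tgt. (\<Sum>e\<in>S. lam e * differential (prop_fun B e (c e) (m e)) x y) = 0"
    using assms(5) unfolding pinch_point_def by blast
  have "finite S" "e \<in> E" "src e \<in> V" "tgt e \<in> V"
    using assms(1,3) \<open>e \<in> S\<close> finite_subset unfolding is_graph_def by blast+
  with connected have closing_path: "(tgt e, src e) \<in> (adj_rel (E - S) src tgt)\<^sup>*"
    unfolding graph_connected_def by blast
  have "B (x e - c e) a = 0" for a
  proof -
    obtain y where "y \<in> H1 V E src tgt" "y e = a" "\<And>e'. e' \<noteq> e \<Longrightarrow> e' \<notin> E - S \<Longrightarrow> y e' = 0"
      using cycle_through_edge[OF assms(1) _ \<open>e \<in> E\<close> _ closing_path] \<open>e \<in> S\<close> by blast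
    with dependency sum_differentials_supported_on_edge[OF assms(2) \<open>finite S\<close> \<open>e \<in> S\<close>, of y lam c m x]
    show ?thesis using \<open>lam e \<noteq> 0\<close> by auto
  qed
  then have "x e = c e"
    using assms(2) unfolding nondeg_sym_bilinear_def by (metis eq_iff_diff_eq_0)
  moreover have "prop_fun B e (c e) (m e) x = 0"
    using x_quadrics \<open>e \<in> S\<close> unfolding quadric_def by blast
  ultimately have "m e ^ 2 = 0"
    unfolding prop_fun_def by (simp add: nondeg_sym_bilinear_zero[OF assms(2)])
  with assms(4) \<open>e \<in> S\<close> show False by simp
qed

end
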